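(* Let $n\geq 1$, $m\geq 2$, and let $M$ be a perfect matching of $T(2n+1,2m)$. Then there is a perfect matching $M'$ of $T(2n+1,2m)$ obtained from $M$ by a finite sequence of flips such that $M'\cap E_i=\emptyset$ for some $1\leq i\leq 2m$.
   Context: $T(2n+1,2m)$ is the graph with vertices $(u_i,v_j)$, $i\in\mathbb{Z}_{2m}$, $j\in\mathbb{Z}_{2n+1}$, where $(u_i,v_j)$ is adjacent to $(u_{i+1},v_j)$ and $(u_i,v_{j+1})$, embedded in the torus with faces the $4$-cycles $(u_i,v_j)(u_{i+1},v_j)(u_{i+1},v_{j+1})(u_i,v_{j+1})$. For $1\le i\le 2m$, $E_i=\{(u_i,v_j)(u_{i+1},v_j):1\le j\le 2n+1\}$ (index $i+1$ mod $2m$). A flip of a perfect matching $M$ replaces $M$ by $M\oplus E(C)$ where $C$ is a facial $4$-cycle whose edges alternate between $M$ and not in $M$. *)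

theory Defs
  imports Main
begin

text \<open>The toroidal grid T(2n+1,2m). Vertex (u_i,v_j) is the pair (i,j) with
  i < 2m (i in Z_2m) and j < 2n+1 (j in Z_(2n+1)). Edges are two-element vertex sets.\<close>

definition tvert :: "nat \<Rightarrow> nat \<Rightarrow> (nat \<times> nat) set" where
  "tvert n m = {0..<2*m} \<times> {0..<2*n+1}"

definition hedge :: "nat \<Rightarrow> nat \<Rightarrow> nat \<Rightarrow> nat \<Rightarrow> (nat \<times> nat) set" where
  "hedge n m i j = {(i mod (2*m), j mod (2*n+1)), ((i+1) mod (2*m), j mod (2*n+1))}"

definition vedge :: "nat \<Rightarrow> nat \<Rightarrow> nat \<Rightarrow> nat \<Rightarrow> (nat \<times> nat) set" where
  "vedge n m i j = {(i mod (2*m), j mod (2*n+1)), (i mod (2*m), (j+1) mod (2*n+1))}"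

definition tedges :: "nat \<Rightarrow> nat \<Rightarrow> (nat \<times> nat) set set" where
  "tedges n m = {hedge n m i j | i j. i < 2*m \<and> j < 2*n+1}
              \<union> {vedge n m i j | i j. i < 2*m \<and> j < 2*n+1}"

definition perfect_matching :: "nat \<Rightarrow> nat \<Rightarrow> (nat \<times> nat) set set \<Rightarrow> bool" where
  "perfect_matching n m M \<longleftrightarrow> M \<subseteq> tedges n m \<and>
     (\<forall>v \<in> tvert n m. \<exists>!e. e \<in> M \<and> v \<in> e)"

definition face_edges :: "nat \<Rightarrow> nat \<Rightarrow> nat \<Rightarrow> nat \<Rightarrow> (nat \<times> nat) set set" where
  "face_edges n m i j = {hedge n m i j, vedge n m (i+1) j, hedge n m i (j+1), vedge n m i j}"

definition alternating_face :: "nat \<Rightarrow> nat \<Rightarrow> (nat \<times> nat) set set \<Rightarrow> nat \<Rightarrow> nat \<Rightarrow> bool" where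
  "alternating_face n m M i j \<longleftrightarrow>
     (hedge n m i j \<in> M \<and> vedge n m (i+1) j \<notin> M \<and> hedge n m i (j+1) \<in> M \<and> vedge n m i j \<notin> M)
   \<or> (hedge n m i j \<notin> M \<and> vedge n m (i+1) j \<in> M \<and> hedge n m i (j+1) \<notin> M \<and> vedge n m i j \<in> M)"

definition flip :: "nat \<Rightarrow> nat \<Rightarrow> (nat \<times> nat) set set \<Rightarrow> (nat \<times> nat) set set \<Rightarrow> bool" where
  "flip n m M M' \<longleftrightarrow> (\<exists>i < 2*m. \<exists>j < 2*n+1. alternating_face n m M i j \<and>
      M' = (M - face_edges n m i j) \<union> (face_edges n m i j - M))"

definition Eset :: "nat \<Rightarrow> nat \<Rightarrow> nat \<Rightarrow> (nat \<times> nat) set set" where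
  "Eset n m i = {hedge n m i j | j. 1 \<le> j \<and> j \<le> 2*n+1}"

end

theory Submission
  imports Defs
begin

text \<open>Call the vertices \<open>(u_r, v_j)\<close>, \<open>j \<in> \<int>\<^sub>2\<^sub>n\<^sub>+\<^sub>1\<close>, row \<open>r\<close>, the sets \<open>E\<^sub>i\<close> layers,
  and call a vertex of row \<open>r\<close> crossed if \<open>M\<close> matches it by an edge of \<open>E\<^sub>r\<^sub>-\<^sub>1\<close> or \<open>E\<^sub>r\<close>.
  The other vertices of the row are matched within the row, so consecutive crossed
  vertices of a row are an odd distance apart.

  If some \<open>E\<^sub>s\<close> contains two \<open>M\<close>-edges that are consecutive in \<open>E\<^sub>s\<close>, distinct, and
  an odd distance apart, flips decrease the number of \<open>M\<close>-edges in \<open>\<Union>\<^sub>i E\<^sub>i\<close>: at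
  distance one the two edges bound an alternating face; otherwise either
  \<open>E\<^sub>s\<^sub>-\<^sub>1\<close> or \<open>E\<^sub>s\<^sub>+\<^sub>1\<close> has such a pair strictly closer together, or two flips move one
  edge two steps towards the other. If there is no such pair, the crossed
  vertices of every row alternate between \<open>E\<^sub>r\<^sub>-\<^sub>1\<close> and \<open>E\<^sub>r\<close> at odd steps, which
  is impossible around a cycle of odd length \<open>2n+1\<close> if both layers are used; so
  one of \<open>E\<^sub>0\<close>, \<open>E\<^sub>1\<close> avoids \<open>M\<close>.\<close>

lemma dvd_2_of_dvd_shifts: "(k::int) dvd x - 1 \<Longrightarrow> k dvd x + 1 \<Longrightarrow> k dvd 2"
  by (metis add_diff_cancel_left' diff_diff_eq2 dvd_diff one_add_one)

lemma unique_cover_swap: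
  assumes cover: "\<forall>v\<in>V. \<exists>!e. e \<in> M \<and> v \<in> e"
    and in_M: "e1 \<in> M" "e2 \<in> M" and not_in_M: "e3 \<notin> M" "e4 \<notin> M"
    and same_vertices: "e1 \<union> e2 = e3 \<union> e4" and disjoint: "e3 \<inter> e4 = {}"
    and F: "F = {e1, e2, e3, e4}"
  shows "\<forall>v\<in>V. \<exists>!e. e \<in> sym_diff M F \<and> v \<in> e"
proof
  fix v assume "v \<in> V"
  then obtain e0 where e0: "e0 \<in> M" "v \<in> e0" and uniq: "\<And>e. e \<in> M \<Longrightarrow> v \<in> e \<Longrightarrow> e = e0"
    using cover by blast
  show "\<exists>!e. e \<in> sym_diff M F \<and> v \<in> e"
  proof (cases "v \<in> e3 \<union> e4")
    case True
    then have "e0 \<in> {e1, e2}"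
      using same_vertices in_M uniq by blast
    then have "e0 \<in> F" using F by blast
    from True obtain e' where e': "e' \<in> {e3, e4}" "v \<in> e'" by blast
    show ?thesis
    proof (rule ex1I[of _ e'])
      show "e' \<in> sym_diff M F \<and> v \<in> e'" using e' F not_in_M by blast
    next
      fix e assume e: "e \<in> sym_diff M F \<and> v \<in> e"
      then have "e \<notin> M" using uniq \<open>e0 \<in> F\<close> by blast
      then have "e \<in> {e3, e4}" using e F in_M by blast
      then show "e = e'" using e e' disjoint by blast
    qed
  next
    case False
    then have "e0 \<notin> F" using F same_vertices e0(2) by blast
    show ?thesis
    proof (rule ex1I[of _ e0])
      show "e0 \<in> sym_diff M F \<and> v \<in> e0" using e0 \<open>e0 \<notin> F\<close> by blast
    next
      fix e assume e: "e \<in> sym_diff M F \<and> v \<in> e"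
      then have "e \<in> M" using False F same_vertices by blast
      then show "e = e0" using uniq e by blast
    qed
  qed
qed

lemma finite_tedges: "finite (tedges n m)"
  unfolding tedges_def by (rule finite_UnI; rule finite_image_set2) simp_all

locale torus_grid =
  fixes n m :: nat
  assumes n_pos: "1 \<le> n" and m_ge_2: "2 \<le> m"
begin

definition nrows :: int where "nrows = int (2*m)"
definition ncols :: int where "ncols = int (2*n+1)"

lemma nrows_ge_4: "4 \<le> nrows" and ncols_ge_3: "3 \<le> ncols"
  using m_ge_2 n_pos by (simp_all add: nrows_def ncols_def)

text \<open>Here \<open>m \<ge> 2\<close> is used: for \<open>m = 1\<close> the layers \<open>E\<^sub>0\<close> and \<open>E\<^sub>1\<close> would coincide.\<close>

lemma grid_size_nontrivial [simp]:
  "\<not> nrows dvd 1" "\<not> nrows dvd 2" "\<not> ncols dvd 1" "\<not> ncols dvd 2"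
  "\<bar>nrows\<bar> \<noteq> 1" "\<bar>ncols\<bar> \<noteq> 1"
  using zdvd_not_zless[of 1 nrows] zdvd_not_zless[of 2 nrows]
    zdvd_not_zless[of 1 ncols] zdvd_not_zless[of 2 ncols] nrows_ge_4 ncols_ge_3 by auto

text \<open>Vertices and edges are addressed by integer coordinates, reduced modulo the
  grid size; this removes all wrap-around case distinctions.\<close>

definition vtx :: "int \<Rightarrow> int \<Rightarrow> nat \<times> nat" where
  "vtx a b = (nat (a mod nrows), nat (b mod ncols))"

definition he :: "int \<Rightarrow> int \<Rightarrow> (nat \<times> nat) set" where
  "he a b = {vtx a b, vtx (a+1) b}"

definition ve :: "int \<Rightarrow> int \<Rightarrow> (nat \<times> nat) set" where
  "ve a b = {vtx a b, vtx a (b+1)}"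

lemma vtx_eq_iff: "vtx a b = vtx c d \<longleftrightarrow> nrows dvd (a - c) \<and> ncols dvd (b - d)"
  using nrows_ge_4 ncols_ge_3
  by (simp add: vtx_def mod_eq_dvd_iff[symmetric] eq_nat_nat_iff)

lemma he_eq_iff: "he a b = he c d \<longleftrightarrow> nrows dvd (a - c) \<and> ncols dvd (b - d)"
proof -
  have "\<not> (nrows dvd a - (c + 1) \<and> nrows dvd a + 1 - c)"
    using dvd_2_of_dvd_shifts[of nrows "a - c"] by (auto simp: algebra_simps)
  then show ?thesis
    unfolding he_def doubleton_eq_iff vtx_eq_iff by auto
qed

lemma ve_eq_iff: "ve a b = ve c d \<longleftrightarrow> nrows dvd (a - c) \<and> ncols dvd (b - d)"
proof -
  have "\<not> (ncols dvd b - (d + 1) \<and> ncols dvd b + 1 - d)"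
    using dvd_2_of_dvd_shifts[of ncols "b - d"] by (auto simp: algebra_simps)
  then show ?thesis
    unfolding ve_def doubleton_eq_iff vtx_eq_iff by auto
qed

lemma he_neq_ve [simp]: "he a b \<noteq> ve c d" "ve c d \<noteq> he a b"
proof -
  have "\<not> (nrows dvd a - c \<and> nrows dvd a + 1 - c)"
    using dvd_diff[of nrows "a + 1 - c" "a - c"] by auto
  then show "he a b \<noteq> ve c d"
    unfolding he_def ve_def doubleton_eq_iff vtx_eq_iff by auto
  then show "ve c d \<noteq> he a b" by metis
qed

lemma vtx_of_nat: "vtx (int i) (int j) = (i mod (2*m), j mod (2*n+1))"
  unfolding vtx_def nrows_def ncols_def by (simp only: of_nat_mod[symmetric] nat_int)

lemma hedge_eq_he: "hedge n m i j = he (int i) (int j)"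
  and vedge_eq_ve: "vedge n m i j = ve (int i) (int j)"
  using vtx_of_nat[of "i+1" j] vtx_of_nat[of i "j+1"]
  by (simp_all add: hedge_def vedge_def he_def ve_def vtx_of_nat add.commute)

definition row_idx :: "int \<Rightarrow> nat" where "row_idx a = nat (a mod nrows)"
definition col_idx :: "int \<Rightarrow> nat" where "col_idx b = nat (b mod ncols)"

lemma row_idx_less: "row_idx a < 2*m" and col_idx_less: "col_idx b < 2*n+1"
  using nrows_ge_4 ncols_ge_3
  by (simp_all add: row_idx_def col_idx_def nrows_def ncols_def nat_less_iff)

lemma int_row_idx: "int (row_idx a) = a mod nrows" and int_col_idx: "int (col_idx b) = b mod ncols"
  using nrows_ge_4 ncols_ge_3 by (simp_all add: row_idx_def col_idx_def)

lemma hedge_idx: "hedge n m (row_idx a + k) (col_idx b + l) = he (a + int k) (b + int l)"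
  and vedge_idx: "vedge n m (row_idx a + k) (col_idx b + l) = ve (a + int k) (b + int l)"
  unfolding hedge_eq_he vedge_eq_ve he_eq_iff ve_eq_iff of_nat_add int_row_idx int_col_idx
  by (simp_all add: mod_eq_dvd_iff[symmetric] mod_add_left_eq)

lemma he_in_tedges: "he a b \<in> tedges n m" and ve_in_tedges: "ve a b \<in> tedges n m"
  using hedge_idx[of a 0 b 0] vedge_idx[of a 0 b 0] row_idx_less col_idx_less
  unfolding tedges_def by fastforce+

lemma vtx_in_tvert: "vtx a b \<in> tvert n m"
  using row_idx_less col_idx_less by (simp add: tvert_def vtx_def row_idx_def col_idx_def)

lemma vtx_in_he [simp]: "vtx a b \<in> he a b" "vtx (a+1) b \<in> he a b" "vtx a b \<in> he (a-1) b"
  and vtx_in_ve [simp]: "vtx a b \<in> ve a b" "vtx a (b+1) \<in> ve a b" "vtx a b \<in> ve a (b-1)"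
  by (simp_all add: he_def ve_def)

lemma vtx_in_he_iff: "vtx a b \<in> he c d \<longleftrightarrow> he c d = he a b \<or> he c d = he (a - 1) b"
proof -
  have "nrows dvd a - (c + 1) \<longleftrightarrow> nrows dvd c - (a - 1)"
    by (metis diff_diff_eq2 dvd_diff_commute)
  then show ?thesis
    unfolding he_eq_iff by (auto simp: he_def vtx_eq_iff dvd_diff_commute)
qed

lemma vtx_in_ve_iff: "vtx a b \<in> ve c d \<longleftrightarrow> ve c d = ve a b \<or> ve c d = ve a (b - 1)"
proof -
  have "ncols dvd b - (d + 1) \<longleftrightarrow> ncols dvd d - (b - 1)"
    by (metis diff_diff_eq2 dvd_diff_commute)
  then show ?thesis
    unfolding ve_eq_iff by (auto simp: ve_def vtx_eq_iff dvd_diff_commute)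
qed

lemma tedges_cases:
  assumes "e \<in> tedges n m"
  obtains c d where "e = he c d" | c d where "e = ve c d"
  using assms unfolding tedges_def hedge_eq_he vedge_eq_ve by blast

abbreviation PM :: "(nat \<times> nat) set set \<Rightarrow> bool" where
  "PM \<equiv> perfect_matching n m"

lemma matching_edge_unique:
  "PM M \<Longrightarrow> e \<in> M \<Longrightarrow> e' \<in> M \<Longrightarrow> vtx a b \<in> e \<Longrightarrow> vtx a b \<in> e' \<Longrightarrow> e = e'"
  unfolding perfect_matching_def using vtx_in_tvert by blast

lemma matching_edge_at:
  assumes "PM M"
  shows "he a b \<in> M \<or> he (a - 1) b \<in> M \<or> ve a b \<in> M \<or> ve a (b - 1) \<in> M"
proof -
  obtain e where e: "e \<in> M" "vtx a b \<in> e"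
    using assms vtx_in_tvert[of a b] unfolding perfect_matching_def by metis
  with assms have "e \<in> tedges n m" unfolding perfect_matching_def by blast
  then show ?thesis
  proof (cases rule: tedges_cases)
    case (1 c d)
    then show ?thesis using e vtx_in_he_iff[of a b c d] by auto
  next
    case (2 c d)
    then show ?thesis using e vtx_in_ve_iff[of a b c d] by auto
  qed
qed

definition face :: "int \<Rightarrow> int \<Rightarrow> (nat \<times> nat) set set" where
  "face a b = {he a b, ve (a+1) b, he a (b+1), ve a b}"

definition alternating :: "(nat \<times> nat) set set \<Rightarrow> int \<Rightarrow> int \<Rightarrow> bool" where
  "alternating M a b \<longleftrightarrow>
     (he a b \<in> M \<and> ve (a+1) b \<notin> M \<and> he a (b+1) \<in> M \<and> ve a b \<notin> M)
   \<or> (he a b \<notin> M \<and> ve (a+1) b \<in> M \<and> he a (b+1) \<notin> M \<and> ve a b \<in> M)"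

lemma face_edges_idx: "face_edges n m (row_idx a) (col_idx b) = face a b"
  and alternating_face_idx: "alternating_face n m M (row_idx a) (col_idx b) = alternating M a b"
  using hedge_idx[of a 0 b 0] hedge_idx[of a 0 b 1] vedge_idx[of a 0 b 0] vedge_idx[of a 1 b 0]
  by (simp_all add: face_edges_def face_def alternating_face_def alternating_def)

lemma flip_face: "alternating M a b \<Longrightarrow> flip n m M (sym_diff M (face a b))"
  unfolding flip_def using row_idx_less col_idx_less face_edges_idx alternating_face_idx by metis

lemma perfect_matching_flip_face:
  assumes M: "PM M" and alt: "alternating M a b"
  shows "PM (sym_diff M (face a b))"
proof -
  have cover: "\<forall>v\<in>tvert n m. \<exists>!e. e \<in> M \<and> v \<in> e" and "M \<subseteq> tedges n m"
    using M unfolding perfect_matching_def by blast+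
  moreover have "face a b \<subseteq> tedges n m"
    unfolding face_def using he_in_tedges ve_in_tedges by blast
  moreover have "\<forall>v\<in>tvert n m. \<exists>!e. e \<in> sym_diff M (face a b) \<and> v \<in> e"
    using alt unfolding alternating_def
  proof (elim disjE)
    assume "he a b \<in> M \<and> ve (a+1) b \<notin> M \<and> he a (b+1) \<in> M \<and> ve a b \<notin> M"
    then show ?thesis
      by (intro unique_cover_swap[OF cover, of "he a b" "he a (b+1)" "ve (a+1) b" "ve a b"])
        (auto simp: face_def he_def ve_def vtx_eq_iff)
  next
    assume "he a b \<notin> M \<and> ve (a+1) b \<in> M \<and> he a (b+1) \<notin> M \<and> ve a b \<in> M"
    then show ?thesis
      by (intro unique_cover_swap[OF cover, of "ve (a+1) b" "ve a b" "he a b" "he a (b+1)"])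
        (auto simp: face_def he_def ve_def vtx_eq_iff)
  qed
  ultimately show ?thesis
    unfolding perfect_matching_def by blast
qed

lemma ve_ve_disjoint:
  assumes "PM M" "ve a b \<in> M"
  shows "ve a (b+1) \<notin> M"
proof
  assume "ve a (b+1) \<in> M"
  then have "ve a b = ve a (b+1)"
    using matching_edge_unique[of M "ve a b" "ve a (b+1)" a "b+1"] assms by simp
  then show False by (simp add: ve_eq_iff)
qed

definition crossed :: "(nat \<times> nat) set set \<Rightarrow> int \<Rightarrow> int \<Rightarrow> bool" where
  "crossed M r p \<longleftrightarrow> he (r-1) p \<in> M \<or> he r p \<in> M"

lemma crossed_not_ve:
  assumes "PM M" "crossed M r p"
  shows "ve r p \<notin> M" "ve r (p-1) \<notin> M"
  using assms matching_edge_unique[of M _ "ve r p" r p] matching_edge_unique[of M _ "ve r (p-1)" r p]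
  unfolding crossed_def by fastforce+

lemma not_crossed_ve:
  "PM M \<Longrightarrow> \<not> crossed M r p \<Longrightarrow> ve r p \<in> M \<or> ve r (p-1) \<in> M"
  using matching_edge_at[of M r p] unfolding crossed_def by blast

lemma crossed_gap_even:
  assumes M: "PM M" and start: "crossed M r a" and stop: "crossed M r (a + int t + 1)"
    and between: "\<forall>k. 1 \<le> k \<and> k \<le> t \<longrightarrow> \<not> crossed M r (a + int k)"
  shows "even t"
proof -
  have ve_odd: "ve r (a + 2 * int i + 1) \<in> M" if "2 * i + 1 \<le> t" for i
    using that
  proof (induction i)
    case 0
    then show ?case
      using not_crossed_ve[OF M, of r "a+1"] between crossed_not_ve(1)[OF M start] by fastforce
  next
    case (Suc i)
    have "\<not> crossed M r (a + int (2 * i + 3))"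
      using between[rule_format, of "2 * i + 3"] Suc.prems by simp
    moreover have "ve r (a + 2 * int i + 2) \<notin> M"
      using ve_ve_disjoint[OF M Suc.IH] Suc.prems by (simp add: add.assoc)
    ultimately show ?case
      using not_crossed_ve[OF M, of r "a + int (2 * i + 3)"] by (simp add: algebra_simps)
  qed
  show "even t"
  proof (rule ccontr)
    assume "odd t"
    then obtain i where "t = 2 * i + 1" by (metis oddE)
    then show False
      using ve_odd[of i] crossed_not_ve(2)[OF M stop] by (simp add: algebra_simps)
  qed
qed

lemma next_crossed:
  assumes M: "PM M" and start: "crossed M r a" and later: "crossed M r (a + int l)" "0 < l"
  obtains t where "t < l" "even t" "crossed M r (a + int t + 1)"
    "\<forall>k. 1 \<le> k \<and> k \<le> t \<longrightarrow> \<not> crossed M r (a + int k)"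
proof -
  obtain k where k: "0 < k" "crossed M r (a + int k)"
    and least: "\<forall>k'<k. \<not> (0 < k' \<and> crossed M r (a + int k'))"
    using later exists_least_iff[of "\<lambda>k. 0 < k \<and> crossed M r (a + int k)"] by blast
  have "k \<le> l" using least later by (meson not_less)
  moreover have between: "\<forall>i. 1 \<le> i \<and> i \<le> k - 1 \<longrightarrow> \<not> crossed M r (a + int i)"
    using least k(1) by (metis One_nat_def Suc_le_eq Suc_pred le_imp_less_Suc)
  moreover have "crossed M r (a + int (k - 1) + 1)"
    using k by (simp add: of_nat_diff)
  moreover note crossed_gap_even[OF M start this between]
  ultimately show thesis
    using that[of "k - 1"] k(1) by simp
qed

text \<open>The condition \<open>int g + 1 < ncols\<close> makes the two edges distinct.\<close>

definition even_gap :: "(nat \<times> nat) set set \<Rightarrow> int \<Rightarrow> int \<Rightarrow> nat \<Rightarrow> bool" where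
  "even_gap M s j g \<longleftrightarrow> he s j \<in> M \<and> he s (j + int g + 1) \<in> M \<and> even g \<and> int g + 1 < ncols \<and>
     (\<forall>k. 1 \<le> k \<and> k \<le> g \<longrightarrow> he s (j + int k) \<notin> M)"

lemma crossed_iff_layers:
  assumes "{s, s'} = {r - 1, r}"
  shows "crossed M r p \<longleftrightarrow> he s p \<in> M \<or> he s' p \<in> M"
  using assms unfolding crossed_def doubleton_eq_iff by auto

text \<open>The crossed vertices of row \<open>r\<close> strictly inside the gap are matched by \<open>E\<^sub>s\<^sub>'\<close>.
  There are at least two of them, since two odd steps cannot add up to the odd
  distance \<open>g+1\<close>; the first two form the shorter even gap.\<close>

lemma even_gap_other_layer:
  assumes M: "PM M" and gap: "even_gap M s j g" and rows: "{s, s'} = {r - 1, r}"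
    and k: "1 \<le> k" "k \<le> g" "he s' (j + int k) \<in> M"
  shows "\<exists>j' g'. g' < g \<and> even_gap M s' j' g'"
proof -
  note crossed = crossed_iff_layers[OF rows, of M]
  from gap have first: "he s j \<in> M" and last: "he s (j + int g + 1) \<in> M" and "even g"
    and short: "int g + 1 < ncols" and free: "\<forall>k. 1 \<le> k \<and> k \<le> g \<longrightarrow> he s (j + int k) \<notin> M"
    unfolding even_gap_def by auto
  have "crossed M r j" "crossed M r (j + int k)" "0 < k"
    using first k crossed by auto
  then obtain t1 where t1: "t1 < k" "even t1" "crossed M r (j + int t1 + 1)"
    using next_crossed[OF M] by metis
  define k1 where "k1 = t1 + 1"
  have k1: "1 \<le> k1" "k1 \<le> g" "he s' (j + int k1) \<in> M"
    using t1 k free[rule_format, of k1] crossed by (auto simp: k1_def ac_simps)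
  obtain t2 where t2: "t2 < g + 1 - k1" "even t2" "crossed M r (j + int k1 + int t2 + 1)"
    and between: "\<forall>i. 1 \<le> i \<and> i \<le> t2 \<longrightarrow> \<not> crossed M r (j + int k1 + int i)"
    using next_crossed[OF M, of r "j + int k1" "g + 1 - k1"] k1 last crossed
    by (auto simp: of_nat_diff algebra_simps)
  have "k1 + t2 + 1 \<noteq> g + 1"
    using \<open>even g\<close> t1(2) t2(2) by (auto simp: k1_def)
  then have "he s' (j + int k1 + int t2 + 1) \<in> M"
    using t2 free[rule_format, of "k1 + t2 + 1"] crossed by (auto simp: algebra_simps)
  then have "even_gap M s' (j + int k1) t2"
    using k1 t2 short between crossed unfolding even_gap_def by auto
  moreover have "t2 < g" using t2(1) k1(1) by simp
  ultimately show ?thesis by blast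
qed

definition cross_edges :: "(nat \<times> nat) set set" where
  "cross_edges = {he a b | a b. True}"

definition cross_count :: "(nat \<times> nat) set set \<Rightarrow> nat" where
  "cross_count M = card (M \<inter> cross_edges)"

lemma he_in_cross_edges [simp]: "he a b \<in> cross_edges"
  and ve_notin_cross_edges [simp]: "ve a b \<notin> cross_edges"
  unfolding cross_edges_def by auto

lemma finite_cross_part: "PM M \<Longrightarrow> finite (M \<inter> cross_edges)"
  unfolding perfect_matching_def using finite_tedges finite_subset by blast

lemma sym_diff_face_cross_edges:
  "sym_diff M (face a b) \<inter> cross_edges = sym_diff (M \<inter> cross_edges) {he a b, he a (b+1)}"
proof -
  have "face a b \<inter> cross_edges = {he a b, he a (b+1)}"
    unfolding face_def by auto
  then show ?thesis by blast
qed

lemma ve_notin_at_he: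
  assumes "PM M" "he a b \<in> M"
  shows "ve a b \<notin> M" "ve (a+1) b \<notin> M"
  using assms matching_edge_unique[of M "he a b" "ve a b" a b]
    matching_edge_unique[of M "he a b" "ve (a+1) b" "a+1" b] by auto

lemma even_gap_0_flip:
  assumes M: "PM M" and gap: "even_gap M s j 0"
  shows "\<exists>M'. flip n m M M' \<and> PM M' \<and> cross_count M' < cross_count M"
proof -
  have edges: "he s j \<in> M" "he s (j+1) \<in> M"
    using gap unfolding even_gap_def by simp_all
  then have alt: "alternating M s j"
    unfolding alternating_def using ve_notin_at_he[OF M] by blast
  have "sym_diff M (face s j) \<inter> cross_edges = M \<inter> cross_edges - {he s j, he s (j+1)}"
    unfolding sym_diff_face_cross_edges using edges by auto
  then have "cross_count (sym_diff M (face s j)) < cross_count M"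
    unfolding cross_count_def using edges finite_cross_part[OF M]
    by (metis Diff_iff IntI he_in_cross_edges insertI1 psubset_card_mono Diff_subset psubsetI)
  then show ?thesis
    using flip_face[OF alt] perfect_matching_flip_face[OF M alt] by blast
qed

text \<open>Flip the faces in columns \<open>j+1\<close> and then \<open>j\<close>.\<close>

lemma even_gap_shift:
  assumes M: "PM M" and gap: "even_gap M s j g" and "2 \<le> g"
    and below: "he (s-1) (j+1) \<notin> M" and above: "he (s+1) (j+1) \<notin> M"
  shows "\<exists>M'. (flip n m)\<^sup>*\<^sup>* M M' \<and> PM M' \<and>
           M' \<inter> cross_edges = insert (he s (j+2)) (M \<inter> cross_edges - {he s j})"
proof -
  from gap have first: "he s j \<in> M" and free: "\<forall>k. 1 \<le> k \<and> k \<le> g \<longrightarrow> he s (j + int k) \<notin> M"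
    unfolding even_gap_def by auto
  have free1: "he s (j+1) \<notin> M" and free2: "he s (j+2) \<notin> M"
    using free[rule_format, of 1] free[rule_format, of 2] \<open>2 \<le> g\<close> by simp_all
  have "ve s (j+1) \<in> M"
    using matching_edge_at[OF M, of s "j+1"] free1 below ve_notin_at_he(1)[OF M first] by simp
  moreover have "ve (s+1) (j+1) \<in> M"
    using matching_edge_at[OF M, of "s+1" "j+1"] free1 above ve_notin_at_he(2)[OF M first] by simp
  ultimately have alt1: "alternating M s (j+1)"
    unfolding alternating_def using free1 free2 by (simp add: add.assoc)
  define M1 where "M1 = sym_diff M (face s (j+1))"
  have M1: "PM M1" "flip n m M M1"
    unfolding M1_def using perfect_matching_flip_face[OF M alt1] flip_face[OF alt1] by auto
  have alt2: "alternating M1 s j"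
    unfolding alternating_def M1_def face_def
    using first free1 ve_notin_at_he[OF M first] by (simp add: he_eq_iff ve_eq_iff)
  define M2 where "M2 = sym_diff M1 (face s j)"
  have "PM M2" "flip n m M1 M2"
    unfolding M2_def using perfect_matching_flip_face[OF M1(1) alt2] flip_face[OF alt2] by auto
  moreover have "M2 \<inter> cross_edges = insert (he s (j+2)) (M \<inter> cross_edges - {he s j})"
    unfolding M2_def M1_def sym_diff_face_cross_edges
    using first free1 free2 by (auto simp: he_eq_iff add.assoc)
  ultimately show ?thesis
    using M1(2) by (meson converse_rtranclp_into_rtranclp r_into_rtranclp)
qed

lemma ncols_dvd_small_iff: "0 \<le> x \<Longrightarrow> x < ncols \<Longrightarrow> ncols dvd x \<longleftrightarrow> x = 0"
  using zdvd_not_zless[of x ncols] by (cases "x = 0") auto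

lemma even_gap_after_shift:
  assumes gap: "even_gap M s j g" and "2 \<le> g"
    and M': "M' \<inter> cross_edges = insert (he s (j+2)) (M \<inter> cross_edges - {he s j})"
  shows "even_gap M' s (j+2) (g-2)"
proof -
  have mem: "he s x \<in> M' \<longleftrightarrow> he s x = he s (j+2) \<or> (he s x \<in> M \<and> he s x \<noteq> he s j)" for x
    using M' he_in_cross_edges[of s x] by blast
  from gap have last: "he s (j + int g + 1) \<in> M" and "even g" and short: "int g + 1 < ncols"
    and free: "\<forall>k. 1 \<le> k \<and> k \<le> g \<longrightarrow> he s (j + int k) \<notin> M"
    unfolding even_gap_def by auto
  have "he s (j + int g + 1) \<in> M'"
    using mem last short ncols_dvd_small_iff[of "int g + 1"] by (simp add: he_eq_iff)
  then have "he s (j + 2 + int (g-2) + 1) \<in> M'"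
    using \<open>2 \<le> g\<close> by (simp add: of_nat_diff algebra_simps)
  moreover have "he s (j + 2 + int k) \<notin> M'" if "1 \<le> k" "k \<le> g - 2" for k
  proof -
    have "he s (j + int (k + 2)) \<notin> M"
      using free[rule_format, of "k + 2"] that by linarith
    moreover have "\<not> ncols dvd int k"
      using that short ncols_dvd_small_iff[of "int k"] by simp
    ultimately show ?thesis
      using mem by (simp add: he_eq_iff algebra_simps)
  qed
  ultimately show ?thesis
    unfolding even_gap_def using mem \<open>even g\<close> short \<open>2 \<le> g\<close> by auto
qed

lemma even_gap_reduces_cross_count:
  assumes "PM M" "even_gap M s j g"
  shows "\<exists>M'. (flip n m)\<^sup>*\<^sup>* M M' \<and> PM M' \<and> cross_count M' < cross_count M"
  using assms
proof (induction g arbitrary: M s j rule: less_induct)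
  case (less g)
  note M = less.prems(1) and gap = less.prems(2)
  show ?case
  proof (cases "g = 0")
    case True
    then show ?thesis using even_gap_0_flip[OF M] gap by blast
  next
    case False
    moreover have "even g" using gap unfolding even_gap_def by simp
    ultimately have "2 \<le> g" by presburger
    show ?thesis
    proof (cases "he (s-1) (j+1) \<in> M \<or> he (s+1) (j+1) \<in> M")
      case True
      then obtain s' j' g' where "g' < g" "even_gap M s' j' g'"
        using even_gap_other_layer[OF M gap, of "s-1" s 1]
          even_gap_other_layer[OF M gap, of "s+1" "s+1" 1] \<open>2 \<le> g\<close> by auto
      then show ?thesis using less.IH M by blast
    next
      case False
      then obtain M1 where M1: "(flip n m)\<^sup>*\<^sup>* M M1" "PM M1"
        and cross: "M1 \<inter> cross_edges = insert (he s (j+2)) (M \<inter> cross_edges - {he s j})"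
        using even_gap_shift[OF M gap \<open>2 \<le> g\<close>] by blast
      have "he s j \<in> M \<inter> cross_edges"
        using gap unfolding even_gap_def by simp
      then have "cross_count M1 \<le> cross_count M"
        unfolding cross_count_def cross using finite_cross_part[OF M]
        by (metis card_Suc_Diff1 card_insert_le_m1 diff_Suc_1 le_refl zero_less_Suc)
      moreover obtain M' where "(flip n m)\<^sup>*\<^sup>* M1 M'" "PM M'" "cross_count M' < cross_count M1"
        using less.IH[of "g-2" M1 s "j+2"] M1(2) even_gap_after_shift[OF gap \<open>2 \<le> g\<close> cross]
          \<open>2 \<le> g\<close> by auto
      ultimately show ?thesis
        using M1(1) by (meson order_less_le_trans rtranclp_trans)
    qed
  qed
qed

lemma he_layers_exclusive: "PM M \<Longrightarrow> he (r-1) p \<in> M \<Longrightarrow> he r p \<notin> M"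
  using matching_edge_unique[of M "he (r-1) p" "he r p" r p] by (auto simp: he_eq_iff)

lemma no_even_gap_alternates:
  assumes M: "PM M" and none: "\<forall>s j g. \<not> even_gap M s j g"
    and start: "crossed M r a" and stop: "crossed M r (a + int t + 1)"
    and between: "\<forall>k. 1 \<le> k \<and> k \<le> t \<longrightarrow> \<not> crossed M r (a + int k)"
    and short: "int t + 1 < ncols"
  shows "he r (a + int t + 1) \<in> M \<longleftrightarrow> he r a \<notin> M"
proof -
  have "even t" using crossed_gap_even[OF M start stop between] .
  then have "\<not> (he s a \<in> M \<and> he s (a + int t + 1) \<in> M)" if "s = r - 1 \<or> s = r" for s
    using none[rule_format, of s a t] that between short unfolding even_gap_def crossed_def by blast
  then show ?thesis
    using start stop he_layers_exclusive[OF M] unfolding crossed_def by blast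
qed

text \<open>The crossed vertex \<open>q + d\<close> keeps the first step from wrapping around the whole row.\<close>

lemma crossed_parity_walk:
  assumes M: "PM M" and none: "\<forall>s j g. \<not> even_gap M s j g" and q: "he r q \<in> M"
    and inner: "0 < d" "int d < ncols" "crossed M r (q + int d)"
  shows "x \<le> 2*n+1 \<Longrightarrow> crossed M r (q + int x) \<Longrightarrow> (he r (q + int x) \<in> M \<longleftrightarrow> even x) \<Longrightarrow>
    he r (q + ncols) \<notin> M"
proof (induction "2*n+1 - x" arbitrary: x rule: less_induct)
  case less
  show ?case
  proof (cases "x = 2*n+1")
    case True
    then show ?thesis using less.prems(3) by (simp add: ncols_def)
  next
    case False
    define l where "l = (if x = 0 then d else 2*n+1 - x)"
    have "he r (q + ncols) = he r q" by (simp add: he_eq_iff)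
    then have "crossed M r (q + int x + int l)" "0 < l"
      using q inner less.prems(1) False unfolding l_def crossed_def by (auto simp: ncols_def)
    then obtain t where t: "t < l" "even t" "crossed M r (q + int x + int t + 1)"
      and between: "\<forall>k. 1 \<le> k \<and> k \<le> t \<longrightarrow> \<not> crossed M r (q + int x + int k)"
      using next_crossed[OF M less.prems(2)] by blast
    have "int t + 1 < ncols"
      using t(1) inner(2) less.prems(1) by (auto simp: l_def ncols_def split: if_splits)
    then have "he r (q + int x + int t + 1) \<in> M \<longleftrightarrow> he r (q + int x) \<notin> M"
      using no_even_gap_alternates[OF M none less.prems(2) t(3) between] by blast
    then have "he r (q + int (x + t + 1)) \<in> M \<longleftrightarrow> even (x + t + 1)"
      using less.prems(3) t(2) by (simp add: ac_simps)
    moreover have "crossed M r (q + int (x + t + 1))"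
      using t(3) by (simp add: ac_simps)
    moreover have "x + t + 1 \<le> 2*n+1"
      using t(1) less.prems(1) inner(2) by (auto simp: l_def ncols_def split: if_splits)
    moreover have "2*n+1 - (x + t + 1) < 2*n+1 - x"
      using less.prems(1) False by simp
    ultimately show ?thesis
      using less.hyps by blast
  qed
qed

lemma no_even_gap_adjacent_layers:
  assumes M: "PM M" and none: "\<forall>s j g. \<not> even_gap M s j g"
    and p: "he (r-1) p \<in> M" and q: "he r q \<in> M"
  shows False
proof -
  define d where "d = nat ((p - q) mod ncols)"
  have int_d: "int d = (p - q) mod ncols"
    unfolding d_def using ncols_ge_3 by simp
  have "he (r-1) (q + int d) = he (r-1) p"
    unfolding he_eq_iff int_d by (simp add: mod_eq_dvd_iff[symmetric] mod_add_right_eq)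
  with p have "he (r-1) (q + int d) \<in> M" by simp
  moreover from this have "d \<noteq> 0"
    using he_layers_exclusive[OF M, of r q] q by (metis add.right_neutral of_nat_0)
  moreover have "int d < ncols"
    unfolding int_d using ncols_ge_3 by simp
  ultimately have "he r (q + ncols) \<notin> M"
    using crossed_parity_walk[OF M none q, of d 0] q unfolding crossed_def by simp
  moreover have "he r (q + ncols) = he r q" by (simp add: he_eq_iff)
  ultimately show False using q by simp
qed

lemma Eset_disjoint: "(\<And>q. he (int i) q \<notin> M) \<Longrightarrow> M \<inter> Eset n m i = {}"
  unfolding Eset_def hedge_eq_he by blast

lemma flips_reach_free_layer:
  "PM M \<Longrightarrow> \<exists>M'. (flip n m)\<^sup>*\<^sup>* M M' \<and> PM M' \<and> (\<exists>i. 1 \<le> i \<and> i \<le> 2*m \<and> M' \<inter> Eset n m i = {})"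
proof (induction "cross_count M" arbitrary: M rule: less_induct)
  case less
  show ?case
  proof (cases "\<exists>s j g. even_gap M s j g")
    case True
    then obtain M1 where "(flip n m)\<^sup>*\<^sup>* M M1" "PM M1" "cross_count M1 < cross_count M"
      using even_gap_reduces_cross_count[OF less.prems] by blast
    then show ?thesis
      using less.hyps by (meson rtranclp_trans)
  next
    case False
    then have "(\<forall>p. he 0 p \<notin> M) \<or> (\<forall>q. he 1 q \<notin> M)"
      using no_even_gap_adjacent_layers[OF less.prems, of 1] by auto
    moreover have "he (int (2*m)) p = he 0 p" for p
      by (simp add: he_eq_iff nrows_def)
    ultimately have "M \<inter> Eset n m (2*m) = {} \<or> M \<inter> Eset n m 1 = {}"
      using Eset_disjoint by (metis of_nat_1)
    moreover have "1 \<le> 2*m" using m_ge_2 by simp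
    ultimately show ?thesis
      using less.prems by blast
  qed
qed

end

theorem lemma4p2:
  fixes n m :: nat and M :: "(nat \<times> nat) set set"
  assumes "n \<ge> 1" and "m \<ge> 2" and "perfect_matching n m M"
  shows "\<exists>M'. (flip n m)\<^sup>*\<^sup>* M M' \<and> perfect_matching n m M' \<and>
           (\<exists>i. 1 \<le> i \<and> i \<le> 2*m \<and> M' \<inter> Eset n m i = {})"
proof -
  interpret torus_grid n m
    using assms(1,2) by unfold_locales
  show ?thesis
    using flips_reach_free_layer[OF assms(3)] .
qed

end
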